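(* Let $m>1$, $N\ge2$, $\chi>C_N$, and let $X_0\in\mathcal R^N$ satisfy $\mathcal F^N_m(X_0)<0$. Then the maximal solution $X$ in $\mathcal R^N$ of the gradient flow system with $X(0)=X_0$ blows up in finite time; in particular its maximal time of existence is finite.
   Context: $\mathcal R^N=\{X\in\mathbb R^N: X_1<\dots<X_N,\ \sum_iX_i=0\}$. $\mathcal F^N_m(X)=\frac1{m-1}\sum_{i=1}^{N-1}(X_{i+1}-X_i)^{1-m}-\frac{\chi}{m-1}\sum_{1\le i\ne j\le N}|X_i-X_j|^{1-m}$. $C_N$ is defined by $\frac1{C_N}=\max_{X\in\mathcal R^N}\frac{\sum_{1\le i\ne j\le N}|X_j-X_i|^{1-m}}{\sum_{i=1}^{N-1}(X_{i+1}-X_i)^{1-m}}$. Gradient flow system: for $i=1,\dots,N$, $\dot X_i=-(X_{i+1}-X_i)^{-m}+(X_i-X_{i-1})^{-m}+2\chi\sum_{j\ne i}\mathrm{sign}(j-i)|X_j-X_i|^{-m}$, the first term absent for $i=N$ and the second for $i=1$ (i.e. $\dot X=-\nabla\mathcal F^N_m(X)$). Blow-up in finite time: the maximal existence time $T$ is finite and there exist $i_0$ and $t_n\to T$ with $X_{i_0+1}(t_n)-X_{i_0}(t_n)\to0$. *)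

theory Defs
  imports "HOL-Analysis.Analysis"
begin

text \<open>Configurations X = (X_1,...,X_N) are functions nat => real; only indices 1..N matter.\<close>

definition in_R :: "nat \<Rightarrow> (nat \<Rightarrow> real) \<Rightarrow> bool" where
  "in_R N X \<longleftrightarrow> (\<forall>i\<in>{1..<N}. X i < X (i+1)) \<and> (\<Sum>i=1..N. X i) = 0"

definition gap_sum :: "nat \<Rightarrow> real \<Rightarrow> (nat \<Rightarrow> real) \<Rightarrow> real" where
  "gap_sum N m X = (\<Sum>i=1..N-1. (X (i+1) - X i) powr (1 - m))"

definition pair_sum :: "nat \<Rightarrow> real \<Rightarrow> (nat \<Rightarrow> real) \<Rightarrow> real" where
  "pair_sum N m X = (\<Sum>i=1..N. \<Sum>j\<in>{1..N}-{i}. \<bar>X i - X j\<bar> powr (1 - m))"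

definition F_energy :: "nat \<Rightarrow> real \<Rightarrow> real \<Rightarrow> (nat \<Rightarrow> real) \<Rightarrow> real" where
  "F_energy N m chi X = gap_sum N m X / (m - 1) - chi / (m - 1) * pair_sum N m X"

text \<open>1 / C_N = max over R^N of pair_sum / gap_sum (the max is attained; we use the supremum).\<close>
definition C_const :: "nat \<Rightarrow> real \<Rightarrow> real" where
  "C_const N m = 1 / (SUP X\<in>{X. in_R N X}. pair_sum N m X / gap_sum N m X)"

definition velocity :: "nat \<Rightarrow> real \<Rightarrow> real \<Rightarrow> (nat \<Rightarrow> real) \<Rightarrow> nat \<Rightarrow> real" where
  "velocity N m chi X i =
     (if i < N then - ((X (i+1) - X i) powr (- m)) else 0)
   + (if 1 < i then (X i - X (i-1)) powr (- m) else 0)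
   + 2 * chi * (\<Sum>j\<in>{1..N}-{i}. sgn (real j - real i) * \<bar>X j - X i\<bar> powr (- m))"

definition is_solution :: "nat \<Rightarrow> real \<Rightarrow> real \<Rightarrow> (nat \<Rightarrow> real) \<Rightarrow> ereal \<Rightarrow> (real \<Rightarrow> nat \<Rightarrow> real) \<Rightarrow> bool" where
  "is_solution N m chi X0 T X \<longleftrightarrow> 0 < T \<and> X 0 = X0 \<and>
     (\<forall>t. 0 \<le> t \<and> ereal t < T \<longrightarrow> in_R N (X t) \<and>
        (\<forall>i\<in>{1..N}. ((\<lambda>s. X s i) has_real_derivative velocity N m chi (X t) i)
                       (at t within {s. 0 \<le> s \<and> ereal s < T})))"

definition is_maximal_solution :: "nat \<Rightarrow> real \<Rightarrow> real \<Rightarrow> (nat \<Rightarrow> real) \<Rightarrow> ereal \<Rightarrow> (real \<Rightarrow> nat \<Rightarrow> real) \<Rightarrow> bool" where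
  "is_maximal_solution N m chi X0 T X \<longleftrightarrow> is_solution N m chi X0 T X \<and>
     \<not> (\<exists>T' Y. T < T' \<and> is_solution N m chi X0 T' Y \<and>
              (\<forall>t. 0 \<le> t \<and> ereal t < T \<longrightarrow> (\<forall>i\<in>{1..N}. Y t i = X t i)))"

end

theory Submission
  imports Defs
begin

text \<open>Along the gradient flow the energy \<open>F\<close> decreases, and since \<open>F\<close> is homogeneous of degree
  \<open>1 - m\<close>, Euler's identity gives \<open>d/dt |X|\<^sup>2 = 2 (m - 1) F(X) \<le> 2 (m - 1) F(X\<^sub>0) < 0\<close>. Hence the
  existence time is at most \<open>|X\<^sub>0|\<^sup>2 / (2 (m - 1) |F(X\<^sub>0)|)\<close>. If no gap collapsed along a sequence
  of times tending to \<open>T\<close>, all gaps would stay bounded below by some \<open>\<delta> > 0\<close> near \<open>T\<close>. On such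
  configurations the velocity field is bounded and Lipschitz, so Picard iteration solves the system
  on intervals of a uniform length; by uniqueness this continues the solution beyond \<open>T\<close>,
  contradicting maximality.\<close>

lemma sum_offdiag_swap:
  fixes f :: "'a \<Rightarrow> 'a \<Rightarrow> 'b::comm_monoid_add"
  assumes "finite A"
  shows "(\<Sum>i\<in>A. \<Sum>j\<in>A-{i}. f i j) = (\<Sum>i\<in>A. \<Sum>j\<in>A-{i}. f j i)"
proof -
  have offdiag: "(\<Sum>j\<in>A-{i}. g j) = (\<Sum>j\<in>A. if j = i then 0 else g j)" for g :: "'a \<Rightarrow> 'b" and i
    using assms by (simp add: sum.If_cases Diff_eq Int_commute)
  have "(\<Sum>i\<in>A. \<Sum>j\<in>A-{i}. f i j) = (\<Sum>i\<in>A. \<Sum>j\<in>A. if j = i then 0 else f i j)"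
    by (simp add: offdiag)
  also have "\<dots> = (\<Sum>j\<in>A. \<Sum>i\<in>A. if j = i then 0 else f i j)"
    by (rule sum.swap)
  also have "\<dots> = (\<Sum>i\<in>A. \<Sum>j\<in>A-{i}. f j i)"
    by (simp add: offdiag eq_commute)
  finally show ?thesis .
qed

lemma abs_add3_le:
  fixes a b q c e chi :: real
  assumes "\<bar>a\<bar> \<le> c" "\<bar>b\<bar> \<le> c" "\<bar>q\<bar> \<le> e"
  shows "\<bar>a + b + 2 * chi * q\<bar> \<le> c + c + 2 * \<bar>chi\<bar> * e"
proof -
  have "\<bar>2 * chi * q\<bar> \<le> 2 * \<bar>chi\<bar> * e"
    using assms(3) by (simp add: abs_mult mult_left_mono)
  then show ?thesis
    using assms(1,2) abs_triangle_ineq[of "a + b" "2 * chi * q"] abs_triangle_ineq[of a b] by linarith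
qed

lemma abs_sum_le_card_bound:
  fixes f :: "nat \<Rightarrow> real"
  assumes "\<And>j. j \<in> A \<Longrightarrow> \<bar>f j\<bar> \<le> c" "A \<subseteq> {1..N}" "c \<ge> 0"
  shows "\<bar>\<Sum>j\<in>A. f j\<bar> \<le> real N * c"
proof -
  have "finite A"
    using assms(2) finite_subset by blast
  have "\<bar>\<Sum>j\<in>A. f j\<bar> \<le> (\<Sum>j\<in>A. c)"
    using assms(1) by (intro order_trans[OF sum_abs] sum_mono) auto
  also have "\<dots> = real (card A) * c"
    by simp
  also have "\<dots> \<le> real N * c"
    using card_mono[OF _ assms(2)] assms(3) by (simp add: mult_right_mono)
  finally show ?thesis .
qed

lemma le_of_le_add_tendsto_0:
  fixes x a :: real and E :: "nat \<Rightarrow> real"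
  assumes "\<And>n. x \<le> a + E n" "E \<longlonglongrightarrow> 0"
  shows "x \<le> a"
proof (rule LIMSEQ_le_const[where X = "\<lambda>n. a + E n"])
  show "(\<lambda>n. a + E n) \<longlonglongrightarrow> a"
    using tendsto_add[OF tendsto_const assms(2), of a] by simp
qed (use assms(1) in auto)

lemma powr_neg_lipschitz:
  fixes a b \<delta> m :: real
  assumes "\<delta> \<le> a" "\<delta> \<le> b" "\<delta> > 0" "m > 0"
  shows "\<bar>a powr (-m) - b powr (-m)\<bar> \<le> m * \<delta> powr (-m-1) * \<bar>a - b\<bar>"
proof -
  have "norm (a powr (-m) - b powr (-m)) \<le> m * \<delta> powr (-m-1) * norm (a - b)"
  proof (rule field_differentiable_bound[where S = "{\<delta>..}" and f' = "\<lambda>x. -m * x powr (-m-1)"])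
    fix z assume z: "z \<in> {\<delta>..}"
    then show "((\<lambda>x. x powr (-m)) has_field_derivative -m * z powr (-m-1)) (at z within {\<delta>..})"
      using has_real_derivative_powr[of z "-m"] assms(3) by (auto intro: has_field_derivative_at_within)
    have "z powr (-m-1) \<le> \<delta> powr (-m-1)"
      using powr_mono2'[of "-m-1" \<delta> z] z assms by auto
    then show "norm (-m * z powr (-m-1)) \<le> m * \<delta> powr (-m-1)"
      using assms by (simp add: abs_mult)
  qed (use assms in auto)
  then show ?thesis by simp
qed

lemma DERIV_abs_nonzero:
  fixes g :: "real \<Rightarrow> real"
  assumes g: "(g has_real_derivative g') (at t within S)" and "g t \<noteq> 0"
  shows "((\<lambda>s. \<bar>g s\<bar>) has_real_derivative sgn (g t) * g') (at t within S)"
proof -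
  have "(g \<longlongrightarrow> g t) (at t within S)"
    using DERIV_continuous[OF g] by (simp add: continuous_within)
  then have "eventually (\<lambda>s. dist (g s) (g t) < \<bar>g t\<bar>) (at t within S)"
    using assms(2) by (simp add: tendsto_iff)
  then have "eventually (\<lambda>s. sgn (g t) * g s = \<bar>g s\<bar>) (at t within S)"
    by eventually_elim (auto simp: dist_real_def sgn_if split: if_splits)
  moreover have "((\<lambda>s. sgn (g t) * g s) has_real_derivative sgn (g t) * g') (at t within S)"
    by (intro DERIV_cmult g)
  ultimately show ?thesis
    by (subst (asm) has_field_derivative_cong_eventually) (auto simp: sgn_if)
qed

lemma DERIV_nonpos_imp_le:
  fixes f f' :: "real \<Rightarrow> real"
  assumes "a \<le> b"
    and f: "\<And>x. x \<in> {a..b} \<Longrightarrow> (f has_real_derivative f' x) (at x within {a..b})"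
    and f'_nonpos: "\<And>x. x \<in> {a..b} \<Longrightarrow> f' x \<le> 0"
  shows "f b \<le> f a"
proof (rule DERIV_nonpos_imp_decreasing_open[OF assms(1)])
  show "continuous_on {a..b} f"
    by (rule DERIV_continuous_on[OF f])
  fix x assume x: "a < x" "x < b"
  then have "(f has_real_derivative f' x) (at x)"
    using f[of x] at_within_Icc_at[OF x] by auto
  then show "\<exists>y. (f has_real_derivative y) (at x) \<and> y \<le> 0"
    using f'_nonpos[of x] x by auto
qed

lemma DERIV_bound_imp_abs_diff_le:
  fixes f f' :: "real \<Rightarrow> real"
  assumes "a \<le> b" and "\<And>x. x \<in> {a..b} \<Longrightarrow> (f has_real_derivative f' x) (at x within {a..b})"
    and "\<And>x. x \<in> {a..b} \<Longrightarrow> \<bar>f' x\<bar> \<le> B"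
  shows "\<bar>f b - f a\<bar> \<le> B * (b - a)"
  using field_differentiable_bound[of "{a..b}" f f' B b a] assms by simp

lemma DERIV_le_linear_imp_zero:
  fixes S S' :: "real \<Rightarrow> real"
  assumes "a \<le> b"
    and S: "\<And>t. t \<in> {a..b} \<Longrightarrow> (S has_real_derivative S' t) (at t within {a..b})"
    and S': "\<And>t. t \<in> {a..b} \<Longrightarrow> S' t \<le> K * S t"
    and "S a = 0" "S b \<ge> 0"
  shows "S b = 0"
proof -
  define E where "E t = exp (- (K * t)) * S t" for t
  have "E b \<le> E a"
  proof (rule DERIV_nonpos_imp_le[OF assms(1)])
    fix t assume t: "t \<in> {a..b}"
    show "(E has_real_derivative exp (- (K * t)) * (S' t - K * S t)) (at t within {a..b})"
      unfolding E_def by (auto intro!: derivative_eq_intros S[OF t] simp: algebra_simps)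
    show "exp (- (K * t)) * (S' t - K * S t) \<le> 0"
      using S'[OF t] by (simp add: mult_nonneg_nonpos)
  qed
  then show ?thesis
    using assms(4,5) by (simp add: E_def mult_le_0_iff)
qed

lemma vanishing_sequence_or_eventually_ge:
  fixes g :: "real \<Rightarrow> real"
  assumes "0 < Tr" and pos: "\<And>t. 0 \<le> t \<Longrightarrow> t < Tr \<Longrightarrow> 0 < g t"
    and no_seq: "\<not> (\<exists>tn. (\<forall>n. 0 \<le> tn n \<and> tn n < Tr) \<and> tn \<longlonglongrightarrow> Tr \<and> (\<lambda>n. g (tn n)) \<longlonglongrightarrow> 0)"
  shows "\<exists>d>0. eventually (\<lambda>t. d \<le> g t) (at_left Tr)"
proof (rule ccontr)
  assume not_ge: "\<not> ?thesis"
  define r where "r n = inverse (real (Suc n))" for n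
  have "\<forall>n. \<exists>t. max 0 (Tr - r n) < t \<and> t < Tr \<and> g t < r n"
  proof
    fix n
    have "r n > 0" "max 0 (Tr - r n) < Tr"
      using \<open>0 < Tr\<close> by (auto simp: r_def)
    moreover have "\<not> eventually (\<lambda>t. r n \<le> g t) (at_left Tr)"
      using not_ge \<open>r n > 0\<close> by blast
    ultimately obtain t where "max 0 (Tr - r n) < t" "t < Tr" "\<not> r n \<le> g t"
      unfolding eventually_at_left[OF \<open>max 0 (Tr - r n) < Tr\<close>] by blast
    then show "\<exists>t. max 0 (Tr - r n) < t \<and> t < Tr \<and> g t < r n"
      by (auto simp: not_le)
  qed
  then have "\<exists>tn. \<forall>n. max 0 (Tr - r n) < tn n \<and> tn n < Tr \<and> g (tn n) < r n"
    by (rule choice)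
  then obtain tn where tn: "\<And>n. max 0 (Tr - r n) < tn n" "\<And>n. tn n < Tr" "\<And>n. g (tn n) < r n"
    by blast
  have r: "r \<longlonglongrightarrow> 0"
    unfolding r_def by (rule LIMSEQ_inverse_real_of_nat)
  have lower: "(\<lambda>n. Tr - r n) \<longlonglongrightarrow> Tr"
    using tendsto_diff[OF tendsto_const r, of Tr] by simp
  have "tn \<longlonglongrightarrow> Tr"
    using tn(1,2) by (intro tendsto_sandwich[OF _ _ lower tendsto_const] always_eventually allI less_imp_le) auto
  moreover have "(\<lambda>n. g (tn n)) \<longlonglongrightarrow> 0"
    using tn by (intro tendsto_sandwich[OF _ _ tendsto_const r] always_eventually allI less_imp_le)
      (auto intro!: pos less_imp_le)
  moreover have "\<forall>n. 0 \<le> tn n \<and> tn n < Tr"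
    using tn(1,2) by (auto intro: less_imp_le)
  ultimately show False
    using no_seq by blast
qed

section \<open>The velocity field as a negative gradient\<close>

lemma summation_by_parts_neighbours:
  fixes w a :: "nat \<Rightarrow> real"
  shows "(\<Sum>i=1..N. w i * ((if i < N then - a i else 0) + (if 1 < i then a (i-1) else 0)))
       = (\<Sum>i=1..<N. a i * (w (i+1) - w i))"
proof (induction N)
  case (Suc n)
  show ?case
  proof (cases "n = 0")
    case False
    have "(\<Sum>i=1..n. w i * ((if i < Suc n then - a i else 0) + (if 1 < i then a (i-1) else 0)))
        = (\<Sum>i=1..n. w i * ((if i < n then - a i else 0) + (if 1 < i then a (i-1) else 0))
             + (if i = n then - w n * a n else 0))"
      by (rule sum.cong) (auto simp: algebra_simps)
    also have "\<dots> = (\<Sum>i=1..<n. a i * (w (i+1) - w i)) - w n * a n"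
      using False Suc.IH by (simp add: sum.distrib)
    finally show ?thesis
      using False by (simp add: algebra_simps)
  qed simp
qed simp

lemma sum_weighted_antisymmetric_pairs:
  fixes w :: "nat \<Rightarrow> real" and K :: "nat \<Rightarrow> nat \<Rightarrow> real"
  assumes "finite A" and K_sym: "\<And>i j. K i j = K j i"
  shows "(\<Sum>i\<in>A. w i * (2 * chi * (\<Sum>j\<in>A-{i}. sgn (real j - real i) * K i j)))
       = chi * (\<Sum>i\<in>A. \<Sum>j\<in>A-{i}. (w i - w j) * sgn (real j - real i) * K i j)"
proof -
  define P where "P = (\<Sum>i\<in>A. \<Sum>j\<in>A-{i}. w i * sgn (real j - real i) * K i j)"
  have antisym: "w i * sgn (real i - real j) * K j i = - (w i * sgn (real j - real i) * K i j)" for i j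
    by (auto simp: sgn_if K_sym)
  have "(\<Sum>i\<in>A. \<Sum>j\<in>A-{i}. w j * sgn (real j - real i) * K i j)
      = (\<Sum>i\<in>A. \<Sum>j\<in>A-{i}. w i * sgn (real i - real j) * K j i)"
    by (rule sum_offdiag_swap[OF assms(1)])
  also have "\<dots> = - P"
    by (simp only: P_def antisym sum_negf)
  finally have swapped: "(\<Sum>i\<in>A. \<Sum>j\<in>A-{i}. w j * sgn (real j - real i) * K i j) = - P" .
  have "(\<Sum>i\<in>A. \<Sum>j\<in>A-{i}. (w i - w j) * sgn (real j - real i) * K i j) = 2 * P"
    using swapped unfolding P_def by (simp add: algebra_simps sum_subtractf)
  then show ?thesis
    unfolding P_def by (simp add: sum_distrib_left mult.assoc mult.left_commute)
qed

lemma sum_weighted_velocity: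
  fixes w X :: "nat \<Rightarrow> real"
  shows "(\<Sum>i=1..N. w i * velocity N m chi X i) =
     (\<Sum>i=1..<N. (X (i+1) - X i) powr (-m) * (w (i+1) - w i))
     + chi * (\<Sum>i=1..N. \<Sum>j\<in>{1..N}-{i}. (w i - w j) * sgn (real j - real i) * \<bar>X j - X i\<bar> powr (-m))"
proof -
  define a where "a i = (X (i+1) - X i) powr (-m)" for i
  define K where "K i j = \<bar>X j - X i\<bar> powr (-m)" for i j
  have "velocity N m chi X i = ((if i < N then - a i else 0) + (if 1 < i then a (i-1) else 0))
      + 2 * chi * (\<Sum>j\<in>{1..N}-{i}. sgn (real j - real i) * K i j)" for i
    unfolding velocity_def a_def K_def by auto
  then have "(\<Sum>i=1..N. w i * velocity N m chi X i) =
     (\<Sum>i=1..N. w i * ((if i < N then - a i else 0) + (if 1 < i then a (i-1) else 0)))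
     + (\<Sum>i\<in>{1..N}. w i * (2 * chi * (\<Sum>j\<in>{1..N}-{i}. sgn (real j - real i) * K i j)))"
    by (simp add: distrib_left sum.distrib)
  also have "\<dots> = (\<Sum>i=1..<N. a i * (w (i+1) - w i))
     + chi * (\<Sum>i\<in>{1..N}. \<Sum>j\<in>{1..N}-{i}. (w i - w j) * sgn (real j - real i) * K i j)"
    by (subst summation_by_parts_neighbours, subst sum_weighted_antisymmetric_pairs)
      (auto simp: K_def abs_minus_commute)
  finally show ?thesis
    by (simp add: a_def K_def)
qed

lemma sum_velocity_eq_0: "(\<Sum>i=1..N. velocity N m chi X i) = 0"
  using sum_weighted_velocity[where w = "\<lambda>_. 1"] by simp

lemma in_R_less:
  assumes "in_R N X" "i \<in> {1..N}" "j \<in> {1..N}" "i < j"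
  shows "X i < X j"
proof -
  have "0 < (\<Sum>k=i..<j. X (Suc k) - X k)"
    using assms by (intro sum_pos) (auto simp: in_R_def)
  then show ?thesis
    using sum_Suc_diff'[of i j X] assms(4) by simp
qed

lemma in_R_abs_diff:
  assumes "in_R N X" "i \<in> {1..N}" "j \<in> {1..N}" "i \<noteq> j"
  shows "\<bar>X j - X i\<bar> = sgn (real j - real i) * (X j - X i)" and "\<bar>X j - X i\<bar> > 0"
proof -
  have "X i < X j \<or> X j < X i"
    using in_R_less[OF assms(1,2,3)] in_R_less[OF assms(1,3,2)] assms(4) by linarith
  moreover have "X i < X j \<longleftrightarrow> i < j"
    using in_R_less[OF assms(1,2,3)] in_R_less[OF assms(1,3,2)] assms(4) by fastforce
  ultimately show "\<bar>X j - X i\<bar> = sgn (real j - real i) * (X j - X i)" "\<bar>X j - X i\<bar> > 0"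
    by (auto simp: sgn_if)
qed

lemma gap_sum_altdef: "gap_sum N m X = (\<Sum>i=1..<N. (X (i+1) - X i) powr (1 - m))"
  unfolding gap_sum_def by (rule sum.cong) auto

text \<open>Euler's identity for the energy, which is homogeneous of degree \<open>1 - m\<close>.\<close>

lemma sum_position_velocity:
  assumes "in_R N X" "m \<noteq> 1"
  shows "(\<Sum>i=1..N. X i * velocity N m chi X i) = (m - 1) * F_energy N m chi X"
proof -
  have gaps: "(X (i+1) - X i) powr (-m) * (X (i+1) - X i) = (X (i+1) - X i) powr (1-m)"
    if "i \<in> {1..<N}" for i
  proof -
    have "X i < X (i+1)"
      using assms(1) that by (auto simp: in_R_def)
    then show ?thesis
      using powr_mult_base[of "X (i+1) - X i" "-m"] by (simp add: mult.commute)
  qed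
  have pairs: "(X i - X j) * sgn (real j - real i) * \<bar>X j - X i\<bar> powr (-m) = - (\<bar>X i - X j\<bar> powr (1-m))"
    if "i \<in> {1..N}" "j \<in> {1..N}-{i}" for i j
  proof -
    have "(X i - X j) * sgn (real j - real i) = - \<bar>X j - X i\<bar>"
      using in_R_abs_diff(1)[OF assms(1), of i j] that by (simp add: algebra_simps)
    then show ?thesis
      using powr_mult_base[OF abs_ge_zero, of "X i - X j" "-m"] by (simp add: abs_minus_commute)
  qed
  have "(\<Sum>i=1..<N. (X (i+1) - X i) powr (-m) * (X (i+1) - X i)) = gap_sum N m X"
    unfolding gap_sum_altdef using gaps by (intro sum.cong) auto
  moreover have "(\<Sum>i=1..N. \<Sum>j\<in>{1..N}-{i}. (X i - X j) * sgn (real j - real i) * \<bar>X j - X i\<bar> powr (-m))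
      = - pair_sum N m X"
    unfolding pair_sum_def sum_negf[symmetric] by (intro sum.cong refl) (simp add: pairs)
  ultimately have "(\<Sum>i=1..N. X i * velocity N m chi X i) = gap_sum N m X - chi * pair_sum N m X"
    unfolding sum_weighted_velocity by simp
  moreover have "m - 1 \<noteq> 0"
    using assms(2) by simp
  ultimately show ?thesis
    by (simp add: F_energy_def right_diff_distrib)
qed

lemma has_real_derivative_gap_sum:
  fixes X :: "real \<Rightarrow> nat \<Rightarrow> real"
  assumes "in_R N (X t)" and w: "\<And>i. i \<in> {1..N} \<Longrightarrow> ((\<lambda>s. X s i) has_real_derivative w i) (at t within S)"
  shows "((\<lambda>s. gap_sum N m (X s)) has_real_derivative
           (1 - m) * (\<Sum>i=1..<N. (X t (i+1) - X t i) powr (-m) * (w (i+1) - w i))) (at t within S)"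
  unfolding gap_sum_altdef sum_distrib_left
proof (rule DERIV_sum)
  fix i assume i: "i \<in> {1..<N}"
  have diff: "((\<lambda>s. X s (i+1) - X s i) has_real_derivative w (i+1) - w i) (at t within S)"
    using i by (intro DERIV_diff w) auto
  have pos: "X t (i+1) - X t i > 0"
    using assms(1) i by (auto simp: in_R_def)
  show "((\<lambda>s. (X s (i+1) - X s i) powr (1-m)) has_real_derivative
      (1 - m) * ((X t (i+1) - X t i) powr (-m) * (w (i+1) - w i))) (at t within S)"
    using DERIV_chain2[OF has_real_derivative_powr[OF pos, of "1 - m"] diff] by (simp add: mult.assoc)
qed

lemma has_real_derivative_pair_sum:
  fixes X :: "real \<Rightarrow> nat \<Rightarrow> real"
  assumes "in_R N (X t)" and w: "\<And>i. i \<in> {1..N} \<Longrightarrow> ((\<lambda>s. X s i) has_real_derivative w i) (at t within S)"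
  shows "((\<lambda>s. pair_sum N m (X s)) has_real_derivative
           (m - 1) * (\<Sum>i=1..N. \<Sum>j\<in>{1..N}-{i}. (w i - w j) * sgn (real j - real i) * \<bar>X t j - X t i\<bar> powr (-m)))
         (at t within S)"
  unfolding pair_sum_def sum_distrib_left
proof (intro DERIV_sum)
  fix i j assume i: "i \<in> {1..N}" and j: "j \<in> {1..N}-{i}"
  have sgn_eq: "sgn (X t i - X t j) = - sgn (real j - real i)"
    using in_R_abs_diff[OF assms(1), of i j] i j by (auto simp: sgn_if abs_if split: if_splits)
  have pos: "\<bar>X t i - X t j\<bar> > 0"
    using in_R_abs_diff(2)[OF assms(1), of i j] i j by (simp add: abs_minus_commute)
  have "((\<lambda>s. X s i - X s j) has_real_derivative w i - w j) (at t within S)"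
    using i j by (intro DERIV_diff w) auto
  from DERIV_abs_nonzero[OF this] pos
  have "((\<lambda>s. \<bar>X s i - X s j\<bar>) has_real_derivative - sgn (real j - real i) * (w i - w j)) (at t within S)"
    by (simp add: sgn_eq)
  from DERIV_chain2[OF has_real_derivative_powr[OF pos, of "1 - m"] this]
  show "((\<lambda>s. \<bar>X s i - X s j\<bar> powr (1 - m)) has_real_derivative
      (m - 1) * ((w i - w j) * sgn (real j - real i) * \<bar>X t j - X t i\<bar> powr (-m))) (at t within S)"
    by (simp add: abs_minus_commute algebra_simps)
qed

lemma has_real_derivative_F_energy:
  fixes X :: "real \<Rightarrow> nat \<Rightarrow> real"
  assumes "m \<noteq> 1" "in_R N (X t)"
    and w: "\<And>i. i \<in> {1..N} \<Longrightarrow> ((\<lambda>s. X s i) has_real_derivative w i) (at t within S)"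
  shows "((\<lambda>s. F_energy N m chi (X s)) has_real_derivative
           - (\<Sum>i=1..N. w i * velocity N m chi (X t) i)) (at t within S)"
proof -
  have "m - 1 \<noteq> 0"
    using assms(1) by simp
  then have eqs: "(1 - m) * g / (m - 1) = - g" "chi / (m - 1) * ((m - 1) * p) = chi * p" for g p :: real
    by (simp_all add: nonzero_divide_eq_eq algebra_simps)
  note gap = DERIV_cdivide[OF has_real_derivative_gap_sum[where m = m, OF assms(2) w], where c = "m - 1"]
  note pair = DERIV_cmult[OF has_real_derivative_pair_sum[where m = m, OF assms(2) w], where c = "chi / (m - 1)"]
  show ?thesis
    using DERIV_diff[OF gap pair] unfolding F_energy_def sum_weighted_velocity eqs by simp
qed

section \<open>Finite existence time\<close>

lemma is_solution_on_Icc: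
  assumes "is_solution N m chi X0 T X" "ereal t < T" "s \<in> {0..t}"
  shows "in_R N (X s)"
    and "\<And>i. i \<in> {1..N} \<Longrightarrow> ((\<lambda>s. X s i) has_real_derivative velocity N m chi (X s) i) (at s within {0..t})"
proof -
  have sub: "{0..t} \<subseteq> {s. 0 \<le> s \<and> ereal s < T}"
    using assms(2) by auto (meson ereal_less_eq(3) le_less_trans)
  with assms(1,3) show "in_R N (X s)"
    unfolding is_solution_def by auto
  fix i assume "i \<in> {1..N}"
  with assms(1,3) sub show "((\<lambda>s. X s i) has_real_derivative velocity N m chi (X s) i) (at s within {0..t})"
    unfolding is_solution_def by (blast intro: DERIV_subset)
qed

lemma solution_energy_le:
  assumes sol: "is_solution N m chi X0 T X" and "m \<noteq> 1" "ereal t < T" "0 \<le> t"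
  shows "F_energy N m chi (X t) \<le> F_energy N m chi X0"
proof -
  have "F_energy N m chi (X t) \<le> F_energy N m chi (X 0)"
  proof (rule DERIV_nonpos_imp_le[OF \<open>0 \<le> t\<close>])
    fix s assume "s \<in> {0..t}"
    note on_Icc = is_solution_on_Icc[OF sol \<open>ereal t < T\<close> this]
    show "((\<lambda>s. F_energy N m chi (X s)) has_real_derivative
        - (\<Sum>i=1..N. velocity N m chi (X s) i * velocity N m chi (X s) i)) (at s within {0..t})"
      by (rule has_real_derivative_F_energy[OF \<open>m \<noteq> 1\<close> on_Icc])
    show "- (\<Sum>i=1..N. velocity N m chi (X s) i * velocity N m chi (X s) i) \<le> 0"
      by (simp add: sum_nonneg)
  qed
  with sol show ?thesis
    unfolding is_solution_def by simp
qed

text \<open>By Euler's identity the second moment grows at rate \<open>2 (m - 1) F\<close>, which the energy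
  dissipation keeps below \<open>2 (m - 1) F(X\<^sub>0) < 0\<close>.\<close>

lemma solution_time_bound:
  assumes sol: "is_solution N m chi X0 T X" and "m > 1" "F_energy N m chi X0 < 0"
    and "ereal t < T" "0 \<le> t"
  shows "t \<le> (\<Sum>i=1..N. (X0 i)^2) / (2 * (m - 1) * - F_energy N m chi X0)"
proof -
  define F0 where "F0 = F_energy N m chi X0"
  define V where "V s = (\<Sum>i=1..N. (X s i)^2) - 2 * (m - 1) * F0 * s" for s
  have "V t \<le> V 0"
  proof (rule DERIV_nonpos_imp_le[OF \<open>0 \<le> t\<close>])
    fix s assume s: "s \<in> {0..t}"
    note on_Icc = is_solution_on_Icc[OF sol \<open>ereal t < T\<close> s]
    have "(V has_real_derivative (\<Sum>i=1..N. 2 * X s i * velocity N m chi (X s) i) - 2 * (m - 1) * F0)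
        (at s within {0..t})"
      unfolding V_def by (auto intro!: derivative_eq_intros DERIV_sum on_Icc(2) simp: mult_ac)
    moreover have "(\<Sum>i=1..N. 2 * X s i * velocity N m chi (X s) i) = 2 * (m - 1) * F_energy N m chi (X s)"
    proof -
      have "(\<Sum>i=1..N. 2 * X s i * velocity N m chi (X s) i) = 2 * (\<Sum>i=1..N. X s i * velocity N m chi (X s) i)"
        by (simp add: sum_distrib_left mult.assoc)
      also have "\<dots> = 2 * (m - 1) * F_energy N m chi (X s)"
        using sum_position_velocity[where m = m and chi = chi, OF on_Icc(1)] \<open>m > 1\<close> by simp
      finally show ?thesis .
    qed
    ultimately show "(V has_real_derivative 2 * (m - 1) * (F_energy N m chi (X s) - F0)) (at s within {0..t})"
      by (simp add: right_diff_distrib)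
    have "ereal s < T"
      using s \<open>ereal t < T\<close> by (meson atLeastAtMost_iff ereal_less_eq(3) le_less_trans)
    then have "F_energy N m chi (X s) \<le> F0"
      unfolding F0_def using solution_energy_le[OF sol] s \<open>m > 1\<close> by simp
    then show "2 * (m - 1) * (F_energy N m chi (X s) - F0) \<le> 0"
      using \<open>m > 1\<close> by (simp add: mult_nonneg_nonpos)
  qed
  moreover have "X 0 = X0"
    using sol unfolding is_solution_def by simp
  ultimately have "t * (2 * (m - 1) * - F0) \<le> (\<Sum>i=1..N. (X0 i)^2)"
    unfolding V_def using sum_nonneg[of "{1..N}" "\<lambda>i. (X t i)^2"] by (simp add: algebra_simps)
  moreover have "2 * (m - 1) * - F0 > 0"
    using assms(2,3) by (intro mult_pos_pos) (simp_all add: F0_def)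
  ultimately show ?thesis
    unfolding F0_def[symmetric] by (simp only: pos_le_divide_eq)
qed

lemma solution_time_finite:
  assumes "is_solution N m chi X0 T X" "m > 1" "F_energy N m chi X0 < 0"
  shows "T < \<infinity>"
proof (rule ccontr)
  define B where "B = (\<Sum>i=1..N. (X0 i)^2) / (2 * (m - 1) * - F_energy N m chi X0)"
  assume "\<not> T < \<infinity>"
  then have "B + 1 \<le> B" if "0 \<le> B"
    using solution_time_bound[OF assms, of "B + 1"] that by (simp add: B_def)
  moreover have "0 \<le> B"
    using assms(2,3) unfolding B_def by (intro divide_nonneg_pos sum_nonneg mult_pos_pos) auto
  ultimately show False by simp
qed

section \<open>Configurations with separated particles\<close>

definition gaps_ge :: "nat \<Rightarrow> real \<Rightarrow> (nat \<Rightarrow> real) \<Rightarrow> bool" where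
  "gaps_ge N \<delta> Y \<longleftrightarrow> (\<forall>i\<in>{1..<N}. \<delta> \<le> Y (i+1) - Y i)"

definition dist_l1 :: "nat \<Rightarrow> (nat \<Rightarrow> real) \<Rightarrow> (nat \<Rightarrow> real) \<Rightarrow> real" where
  "dist_l1 N Y W = (\<Sum>i=1..N. \<bar>Y i - W i\<bar>)"

lemma abs_le_dist_l1: "i \<in> {1..N} \<Longrightarrow> \<bar>Y i - W i\<bar> \<le> dist_l1 N Y W"
  unfolding dist_l1_def by (rule member_le_sum) auto

lemma dist_l1_nonneg: "dist_l1 N Y W \<ge> 0"
  unfolding dist_l1_def by (simp add: sum_nonneg)

lemma dist_l1_le: "(\<And>i. i \<in> {1..N} \<Longrightarrow> \<bar>Y i - W i\<bar> \<le> b) \<Longrightarrow> dist_l1 N Y W \<le> real N * b"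
  unfolding dist_l1_def using sum_bounded_above[of "{1..N}" "\<lambda>i. \<bar>Y i - W i\<bar>" b] by auto

lemma gaps_ge_abs_diff:
  assumes "gaps_ge N \<delta> Y" "0 \<le> \<delta>" "i \<in> {1..N}" "j \<in> {1..N}" "i \<noteq> j"
  shows "\<delta> \<le> \<bar>Y j - Y i\<bar>"
proof -
  have "\<delta> \<le> Y l - Y k" if "k \<in> {1..N}" "l \<in> {1..N}" "k < l" for k l
  proof -
    have "\<delta> \<le> Y (Suc k) - Y k"
      using assms(1) that by (auto simp: gaps_ge_def)
    also have "\<dots> \<le> (\<Sum>p=k..<l. Y (Suc p) - Y p)"
    proof (rule member_le_sum)
      fix p assume "p \<in> {k..<l} - {k}"
      then have "\<delta> \<le> Y (Suc p) - Y p"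
        using assms(1) that by (auto simp: gaps_ge_def)
      then show "0 \<le> Y (Suc p) - Y p"
        using assms(2) by linarith
    qed (use that in auto)
    also have "\<dots> = Y l - Y k"
      using that by (simp add: sum_Suc_diff')
    finally show ?thesis .
  qed
  then show ?thesis
    using assms(3-5) by (cases i j rule: linorder_cases) force+
qed

lemma gaps_ge_imp_in_R:
  "gaps_ge N \<delta> Y \<Longrightarrow> \<delta> > 0 \<Longrightarrow> (\<Sum>i=1..N. Y i) = 0 \<Longrightarrow> in_R N Y"
  unfolding gaps_ge_def in_R_def by force

lemma gaps_ge_mono: "gaps_ge N \<delta> Y \<Longrightarrow> \<delta>' \<le> \<delta> \<Longrightarrow> gaps_ge N \<delta>' Y"
  unfolding gaps_ge_def by force

lemma gaps_ge_perturb: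
  assumes "gaps_ge N (2 * \<delta>) Z" "\<And>i. i \<in> {1..N} \<Longrightarrow> \<bar>Y i - Z i\<bar> \<le> \<delta> / 2"
  shows "gaps_ge N \<delta> Y"
  unfolding gaps_ge_def
proof
  fix i assume i: "i \<in> {1..<N}"
  have "\<bar>Y (i+1) - Z (i+1)\<bar> \<le> \<delta> / 2" "\<bar>Y i - Z i\<bar> \<le> \<delta> / 2" "2 * \<delta> \<le> Z (i+1) - Z i"
    using assms i unfolding gaps_ge_def by auto
  then show "\<delta> \<le> Y (i+1) - Y i"
    by linarith
qed

lemma gaps_ge_neighbour_pos:
  "gaps_ge N \<delta> Y \<Longrightarrow> \<delta> > 0 \<Longrightarrow> i \<in> {1..<N} \<Longrightarrow> Y (i+1) - Y i = \<bar>Y (i+1) - Y i\<bar>"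
  unfolding gaps_ge_def by force

lemma interaction_le:
  assumes "gaps_ge N \<delta> Y" "\<delta> > 0" "m \<ge> 0" "p \<in> {1..N}" "q \<in> {1..N}" "p \<noteq> q"
  shows "\<bar>Y p - Y q\<bar> powr (-m) \<le> \<delta> powr (-m)"
  using powr_mono2'[of "-m" \<delta> "\<bar>Y p - Y q\<bar>"] gaps_ge_abs_diff[OF assms(1) _ assms(4-6)] assms(2,3)
  by (simp add: abs_minus_commute)

lemma interaction_lipschitz:
  assumes "gaps_ge N \<delta> Y" "gaps_ge N \<delta> W" "\<delta> > 0" "m > 0" "p \<in> {1..N}" "q \<in> {1..N}" "p \<noteq> q"
  shows "\<bar>\<bar>Y p - Y q\<bar> powr (-m) - \<bar>W p - W q\<bar> powr (-m)\<bar> \<le> 2 * m * \<delta> powr (-m-1) * dist_l1 N Y W"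
proof -
  have "\<bar>\<bar>Y p - Y q\<bar> powr (-m) - \<bar>W p - W q\<bar> powr (-m)\<bar>
      \<le> m * \<delta> powr (-m-1) * \<bar>\<bar>Y p - Y q\<bar> - \<bar>W p - W q\<bar>\<bar>"
    using gaps_ge_abs_diff[OF assms(1) _ assms(5-7)] gaps_ge_abs_diff[OF assms(2) _ assms(5-7)] assms(3,4)
    by (intro powr_neg_lipschitz) (auto simp: abs_minus_commute)
  also have "\<bar>\<bar>Y p - Y q\<bar> - \<bar>W p - W q\<bar>\<bar> \<le> 2 * dist_l1 N Y W"
    using abs_le_dist_l1[OF assms(5), of Y W] abs_le_dist_l1[OF assms(6), of Y W] by linarith
  finally show ?thesis
    using assms(3,4) by (simp add: mult_left_mono)
qed

definition velocity_bound :: "nat \<Rightarrow> real \<Rightarrow> real \<Rightarrow> real \<Rightarrow> real" where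
  "velocity_bound N m chi \<delta> = \<delta> powr (-m) * (2 + 2 * \<bar>chi\<bar> * real N)"

definition velocity_lipschitz :: "nat \<Rightarrow> real \<Rightarrow> real \<Rightarrow> real \<Rightarrow> real" where
  "velocity_lipschitz N m chi \<delta> = 2 * m * \<delta> powr (-m-1) * (2 + 2 * \<bar>chi\<bar> * real N)"

lemma velocity_bound_pos: "\<delta> > 0 \<Longrightarrow> velocity_bound N m chi \<delta> > 0"
  unfolding velocity_bound_def by (intro mult_pos_pos) (auto intro: add_pos_nonneg)

lemma velocity_lipschitz_pos: "m > 0 \<Longrightarrow> \<delta> > 0 \<Longrightarrow> velocity_lipschitz N m chi \<delta> > 0"
  unfolding velocity_lipschitz_def by (intro mult_pos_pos) (auto intro: add_pos_nonneg)

lemma velocity_abs_le: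
  assumes "gaps_ge N \<delta> Y" "\<delta> > 0" "m \<ge> 0" "i \<in> {1..N}"
  shows "\<bar>velocity N m chi Y i\<bar> \<le> velocity_bound N m chi \<delta>"
proof -
  define c where "c = \<delta> powr (-m)"
  note interaction = interaction_le[OF assms(1-3)]
  have right: "\<bar>if i < N then - ((Y (i+1) - Y i) powr (-m)) else 0\<bar> \<le> c"
    using interaction[of "i+1" i] gaps_ge_neighbour_pos[OF assms(1,2), of i] assms(4) by (auto simp: c_def)
  have left: "\<bar>if 1 < i then (Y i - Y (i-1)) powr (-m) else 0\<bar> \<le> c"
  proof (cases "1 < i")
    case True
    then have "i - 1 \<in> {1..<N}" "i - 1 + 1 = i"
      using assms(4) by auto
    then show ?thesis
      using interaction[of i "i-1"] gaps_ge_neighbour_pos[OF assms(1,2), of "i-1"] assms(4) by (auto simp: c_def)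
  qed (simp add: c_def)
  have pairs: "\<bar>\<Sum>j\<in>{1..N}-{i}. sgn (real j - real i) * \<bar>Y j - Y i\<bar> powr (-m)\<bar> \<le> real N * c"
    using interaction[of _ i] assms(4) by (intro abs_sum_le_card_bound) (auto simp: abs_mult sgn_if c_def)
  have "\<bar>velocity N m chi Y i\<bar> \<le> c + c + 2 * \<bar>chi\<bar> * (real N * c)"
    unfolding velocity_def by (rule abs_add3_le[OF right left pairs])
  then show ?thesis
    by (simp add: velocity_bound_def c_def algebra_simps)
qed

lemma velocity_lipschitz_bound:
  assumes "gaps_ge N \<delta> Y" "gaps_ge N \<delta> W" "\<delta> > 0" "m > 0" "i \<in> {1..N}"
  shows "\<bar>velocity N m chi Y i - velocity N m chi W i\<bar> \<le> velocity_lipschitz N m chi \<delta> * dist_l1 N Y W"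
proof -
  define c where "c = 2 * m * \<delta> powr (-m-1) * dist_l1 N Y W"
  note interaction = interaction_lipschitz[OF assms(1-4), folded c_def]
  note Y_pos = gaps_ge_neighbour_pos[OF assms(1,3)] and W_pos = gaps_ge_neighbour_pos[OF assms(2,3)]
  have right: "\<bar>(if i < N then - ((Y (i+1) - Y i) powr (-m)) else 0)
      - (if i < N then - ((W (i+1) - W i) powr (-m)) else 0)\<bar> \<le> c"
    using interaction[of "i+1" i] Y_pos[of i] W_pos[of i] assms(3-5) dist_l1_nonneg[of N Y W]
    by (auto simp: c_def abs_minus_commute)
  have left: "\<bar>(if 1 < i then (Y i - Y (i-1)) powr (-m) else 0)
      - (if 1 < i then (W i - W (i-1)) powr (-m) else 0)\<bar> \<le> c"
  proof (cases "1 < i")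
    case True
    then have "i - 1 \<in> {1..<N}" "i - 1 + 1 = i"
      using assms(5) by auto
    then show ?thesis
      using interaction[of i "i-1"] Y_pos[of "i-1"] W_pos[of "i-1"] assms(5) by auto
  qed (use assms(3,4) dist_l1_nonneg in \<open>simp add: c_def\<close>)
  have pairs: "\<bar>(\<Sum>j\<in>{1..N}-{i}. sgn (real j - real i) * \<bar>Y j - Y i\<bar> powr (-m))
      - (\<Sum>j\<in>{1..N}-{i}. sgn (real j - real i) * \<bar>W j - W i\<bar> powr (-m))\<bar> \<le> real N * c"
    unfolding sum_subtractf[symmetric] using interaction[of _ i] assms(3-5) dist_l1_nonneg[of N Y W]
    by (intro abs_sum_le_card_bound) (auto simp: sgn_if c_def abs_minus_commute)
  have "\<bar>velocity N m chi Y i - velocity N m chi W i\<bar> \<le> c + c + 2 * \<bar>chi\<bar> * (real N * c)"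
    unfolding velocity_def using abs_add3_le[OF right left pairs] by (simp add: algebra_simps)
  then show ?thesis
    by (simp add: velocity_lipschitz_def c_def algebra_simps)
qed

lemma continuous_on_velocity:
  fixes Y :: "real \<Rightarrow> nat \<Rightarrow> real"
  assumes cont: "\<And>j. j \<in> {1..N} \<Longrightarrow> continuous_on S (\<lambda>t. Y t j)"
    and gaps: "\<And>t. t \<in> S \<Longrightarrow> gaps_ge N \<delta> (Y t)" and "\<delta> > 0" "m > 0" "i \<in> {1..N}"
  shows "continuous_on S (\<lambda>t. velocity N m chi (Y t) i)"
  unfolding continuous_on_def
proof
  fix s assume s: "s \<in> S"
  define L where "L = velocity_lipschitz N m chi \<delta>"
  have "continuous_on S (\<lambda>t. L * dist_l1 N (Y t) (Y s))"
    unfolding dist_l1_def by (intro continuous_intros cont) auto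
  then have "((\<lambda>t. L * dist_l1 N (Y t) (Y s)) \<longlongrightarrow> 0) (at s within S)"
    using s unfolding continuous_on_def by (fastforce simp: dist_l1_def)
  moreover have "\<forall>\<^sub>F t in at s within S.
      norm (velocity N m chi (Y t) i - velocity N m chi (Y s) i) \<le> L * dist_l1 N (Y t) (Y s)"
    unfolding eventually_at_filter L_def
    by (rule always_eventually) (use velocity_lipschitz_bound[OF gaps gaps[OF s] assms(3-5)] in auto)
  ultimately have "((\<lambda>t. velocity N m chi (Y t) i - velocity N m chi (Y s) i) \<longlongrightarrow> 0) (at s within S)"
    by (rule Lim_null_comparison[rotated])
  then show "((\<lambda>t. velocity N m chi (Y t) i) \<longlongrightarrow> velocity N m chi (Y s) i) (at s within S)"
    by (simp add: Lim_null[symmetric])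
qed

section \<open>Local existence and uniqueness\<close>

lemma velocity_flow_sum_const:
  fixes Y :: "real \<Rightarrow> nat \<Rightarrow> real"
  assumes "a \<le> b"
    and "\<And>t i. t \<in> {a..b} \<Longrightarrow> i \<in> {1..N} \<Longrightarrow>
           ((\<lambda>s. Y s i) has_real_derivative velocity N m chi (Y t) i) (at t within {a..b})"
  shows "(\<Sum>i=1..N. Y b i) = (\<Sum>i=1..N. Y a i)"
proof -
  have "\<bar>(\<Sum>i=1..N. Y b i) - (\<Sum>i=1..N. Y a i)\<bar> \<le> 0 * (b - a)"
  proof (rule DERIV_bound_imp_abs_diff_le[OF assms(1)])
    fix t assume "t \<in> {a..b}"
    then show "((\<lambda>t. \<Sum>i=1..N. Y t i) has_real_derivative (\<Sum>i=1..N. velocity N m chi (Y t) i)) (at t within {a..b})"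
      by (intro DERIV_sum assms(2))
  qed (use sum_velocity_eq_0 in simp)
  then show ?thesis
    by simp
qed

lemma velocity_flow_in_R:
  fixes y :: "real \<Rightarrow> nat \<Rightarrow> real"
  assumes y: "\<And>t i. t \<in> {a..b} \<Longrightarrow> i \<in> {1..N} \<Longrightarrow>
              ((\<lambda>s. y s i) has_real_derivative velocity N m chi (y t) i) (at t within {a..b})"
    and "t \<in> {a..b}" "gaps_ge N \<delta> (y t)" "\<delta> > 0" "(\<Sum>i=1..N. y a i) = 0"
  shows "in_R N (y t)"
proof (rule gaps_ge_imp_in_R[OF assms(3,4)])
  have "(\<Sum>i=1..N. y t i) = (\<Sum>i=1..N. y a i)"
    using assms(2) by (intro velocity_flow_sum_const) (auto intro: DERIV_subset[OF y])
  with assms(5) show "(\<Sum>i=1..N. y t i) = 0"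
    by simp
qed

lemma sum_diff_mult_velocity_diff_le:
  assumes "gaps_ge N \<delta> Y" "gaps_ge N \<delta> W" "\<delta> > 0" "m > 0"
  shows "(\<Sum>i=1..N. (Y i - W i) * (velocity N m chi Y i - velocity N m chi W i))
           \<le> velocity_lipschitz N m chi \<delta> * real N * (\<Sum>i=1..N. (Y i - W i)^2)"
proof -
  define L where "L = velocity_lipschitz N m chi \<delta>"
  have "(\<Sum>i=1..N. (Y i - W i) * (velocity N m chi Y i - velocity N m chi W i))
      \<le> (\<Sum>i=1..N. \<bar>Y i - W i\<bar> * (L * dist_l1 N Y W))"
  proof (rule sum_mono)
    fix i assume "i \<in> {1..N}"
    then have "\<bar>velocity N m chi Y i - velocity N m chi W i\<bar> \<le> L * dist_l1 N Y W"
      unfolding L_def by (rule velocity_lipschitz_bound[OF assms(1-4)])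
    then have "\<bar>Y i - W i\<bar> * \<bar>velocity N m chi Y i - velocity N m chi W i\<bar> \<le> \<bar>Y i - W i\<bar> * (L * dist_l1 N Y W)"
      by (intro mult_left_mono) auto
    moreover have "(Y i - W i) * (velocity N m chi Y i - velocity N m chi W i)
        \<le> \<bar>Y i - W i\<bar> * \<bar>velocity N m chi Y i - velocity N m chi W i\<bar>"
      by (metis abs_ge_self abs_mult)
    ultimately show "(Y i - W i) * (velocity N m chi Y i - velocity N m chi W i) \<le> \<bar>Y i - W i\<bar> * (L * dist_l1 N Y W)"
      by linarith
  qed
  also have "\<dots> = L * (dist_l1 N Y W)^2"
    by (simp add: dist_l1_def sum_distrib_left sum_distrib_right power2_eq_square mult_ac)
  also have "\<dots> \<le> L * ((\<Sum>i=1..N. (Y i - W i)^2) * real N)"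
    using sum_squared_le_sum_of_squares[of "\<lambda>i. \<bar>Y i - W i\<bar>" "{1..N}"] assms(3,4)
    by (intro mult_left_mono) (simp_all add: dist_l1_def L_def velocity_lipschitz_def)
  finally show ?thesis
    by (simp add: L_def mult_ac)
qed

lemma velocity_flow_unique:
  fixes Y W :: "real \<Rightarrow> nat \<Rightarrow> real"
  assumes "a \<le> b" "\<delta> > 0" "m > 0"
    and gaps: "\<And>t. t \<in> {a..b} \<Longrightarrow> gaps_ge N \<delta> (Y t)" "\<And>t. t \<in> {a..b} \<Longrightarrow> gaps_ge N \<delta> (W t)"
    and Y: "\<And>t i. t \<in> {a..b} \<Longrightarrow> i \<in> {1..N} \<Longrightarrow>
              ((\<lambda>s. Y s i) has_real_derivative velocity N m chi (Y t) i) (at t within {a..b})"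
    and W: "\<And>t i. t \<in> {a..b} \<Longrightarrow> i \<in> {1..N} \<Longrightarrow>
              ((\<lambda>s. W s i) has_real_derivative velocity N m chi (W t) i) (at t within {a..b})"
    and init: "\<And>i. i \<in> {1..N} \<Longrightarrow> Y a i = W a i"
    and "i \<in> {1..N}"
  shows "Y b i = W b i"
proof -
  define S where "S t = (\<Sum>i=1..N. (Y t i - W t i)^2)" for t
  have "S b = 0"
  proof (rule DERIV_le_linear_imp_zero[OF assms(1), where K = "2 * velocity_lipschitz N m chi \<delta> * real N"])
    fix t assume t: "t \<in> {a..b}"
    show "(S has_real_derivative
        2 * (\<Sum>i=1..N. (Y t i - W t i) * (velocity N m chi (Y t) i - velocity N m chi (W t) i))) (at t within {a..b})"
      unfolding S_def sum_distrib_left by (auto intro!: derivative_eq_intros DERIV_sum Y[OF t] W[OF t])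
    show "2 * (\<Sum>i=1..N. (Y t i - W t i) * (velocity N m chi (Y t) i - velocity N m chi (W t) i))
        \<le> 2 * velocity_lipschitz N m chi \<delta> * real N * S t"
      using sum_diff_mult_velocity_diff_le[OF gaps[OF t] assms(2,3), where chi = chi]
      by (simp add: S_def mult.assoc)
  qed (auto simp: S_def init sum_nonneg)
  then have "\<forall>i\<in>{1..N}. (Y b i - W b i)^2 = 0"
    unfolding S_def by (subst sum_nonneg_eq_0_iff[symmetric]) auto
  then show ?thesis
    using assms(9) by simp
qed

text \<open>The step \<open>h\<close> is chosen so that \<open>M h \<le> \<delta> / 2\<close> and \<open>N L h \<le> 1 / 2\<close>, where \<open>M\<close> and \<open>L\<close> bound
  the velocity field and its Lipschitz constant on configurations with gaps at least \<open>\<delta>\<close>. Starting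
  from a configuration \<open>Z\<close> with gaps at least \<open>2 \<delta>\<close>, every Picard iterate then stays within
  \<open>\<delta> / 2\<close> of \<open>Z\<close> on \<open>[c, c + h]\<close>, so keeps gaps at least \<open>\<delta>\<close>, and the Picard map halves
  \<open>l\<^sup>1\<close> distances.\<close>

definition picard_step :: "nat \<Rightarrow> real \<Rightarrow> real \<Rightarrow> real \<Rightarrow> real" where
  "picard_step N m chi \<delta> =
     min (\<delta> / (2 * velocity_bound N m chi \<delta>)) (1 / (2 * real N * velocity_lipschitz N m chi \<delta>))"

lemma picard_step_pos: "N \<ge> 1 \<Longrightarrow> m > 0 \<Longrightarrow> \<delta> > 0 \<Longrightarrow> picard_step N m chi \<delta> > 0"
  unfolding picard_step_def using velocity_bound_pos velocity_lipschitz_pos by auto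

locale picard_iteration =
  fixes N :: nat and m chi \<delta> :: real and Z :: "nat \<Rightarrow> real" and c :: real
  assumes N_ge_1: "N \<ge> 1" and m_pos: "m > 0" and \<delta>_pos: "\<delta> > 0" and Z_gaps: "gaps_ge N (2 * \<delta>) Z"
begin

abbreviation "M \<equiv> velocity_bound N m chi \<delta>"
abbreviation "L \<equiv> velocity_lipschitz N m chi \<delta>"
abbreviation "h \<equiv> picard_step N m chi \<delta>"

lemma M_pos: "M > 0"
  using velocity_bound_pos[OF \<delta>_pos] .

lemma L_pos: "L > 0"
  using velocity_lipschitz_pos[OF m_pos \<delta>_pos] .

lemma h_pos: "h > 0"
  using picard_step_pos[OF N_ge_1 m_pos \<delta>_pos] .

lemma M_h_le: "M * h \<le> \<delta> / 2"
proof -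
  have "M * h \<le> M * (\<delta> / (2 * M))"
    unfolding picard_step_def using M_pos by (intro mult_left_mono) auto
  then show ?thesis
    using M_pos by simp
qed

lemma N_L_h_le: "real N * L * h \<le> 1 / 2"
proof -
  have "real N * L * h \<le> real N * L * (1 / (2 * real N * L))"
    unfolding picard_step_def using N_ge_1 L_pos by (intro mult_left_mono) auto
  then show ?thesis
    using N_ge_1 L_pos by simp
qed

definition regular :: "(real \<Rightarrow> nat \<Rightarrow> real) \<Rightarrow> bool" where
  "regular Y \<longleftrightarrow>
     (\<forall>i\<in>{1..N}. continuous_on {c..c+h} (\<lambda>t. Y t i)) \<and> (\<forall>t\<in>{c..c+h}. gaps_ge N \<delta> (Y t))"

definition picard :: "(real \<Rightarrow> nat \<Rightarrow> real) \<Rightarrow> real \<Rightarrow> nat \<Rightarrow> real" where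
  "picard Y t i = Z i + integral {c..t} (\<lambda>s. velocity N m chi (Y s) i)"

lemma picard_start: "picard Y c i = Z i"
  by (simp add: picard_def)

lemma picard_deriv:
  assumes "regular Y" "i \<in> {1..N}" "t \<in> {c..c+h}"
  shows "((\<lambda>t. picard Y t i) has_real_derivative velocity N m chi (Y t) i) (at t within {c..c+h})"
proof -
  have "continuous_on {c..c+h} (\<lambda>s. velocity N m chi (Y s) i)"
    using assms(1,2) \<delta>_pos m_pos by (intro continuous_on_velocity) (auto simp: regular_def)
  then show ?thesis
    unfolding picard_def using integral_has_real_derivative[OF _ assms(3)] by (auto intro!: derivative_eq_intros)
qed

lemma picard_near_Z:
  assumes "regular Y" "i \<in> {1..N}" "t \<in> {c..c+h}"
  shows "\<bar>picard Y t i - Z i\<bar> \<le> M * (t - c)"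
proof -
  have "\<bar>picard Y t i - picard Y c i\<bar> \<le> M * (t - c)"
  proof (rule DERIV_bound_imp_abs_diff_le)
    fix s assume s: "s \<in> {c..t}"
    then have s': "s \<in> {c..c+h}"
      using assms(3) by auto
    show "((\<lambda>t. picard Y t i) has_real_derivative velocity N m chi (Y s) i) (at s within {c..t})"
      by (rule DERIV_subset[OF picard_deriv[OF assms(1,2) s']]) (use assms(3) in auto)
    show "\<bar>velocity N m chi (Y s) i\<bar> \<le> M"
      using assms(1) s' m_pos by (intro velocity_abs_le[OF _ \<delta>_pos _ assms(2)]) (auto simp: regular_def)
  qed (use assms(3) in auto)
  then show ?thesis
    by (simp add: picard_start)
qed

lemma near_Z_imp_gaps:
  assumes "t \<in> {c..c+h}" "\<And>i. i \<in> {1..N} \<Longrightarrow> \<bar>Y i - Z i\<bar> \<le> M * (t - c)"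
  shows "gaps_ge N \<delta> Y"
proof (rule gaps_ge_perturb[OF Z_gaps])
  fix i assume "i \<in> {1..N}"
  then have "\<bar>Y i - Z i\<bar> \<le> M * (t - c)"
    by (rule assms(2))
  also have "\<dots> \<le> M * h"
    using assms(1) M_pos by (intro mult_left_mono) auto
  finally show "\<bar>Y i - Z i\<bar> \<le> \<delta> / 2"
    using M_h_le by simp
qed

lemma regular_picard:
  assumes "regular Y"
  shows "regular (picard Y)"
proof -
  have "continuous_on {c..c+h} (\<lambda>t. picard Y t i)" if "i \<in> {1..N}" for i
    using picard_deriv[OF assms that] by (rule DERIV_continuous_on)
  moreover have "gaps_ge N \<delta> (picard Y t)" if "t \<in> {c..c+h}" for t
    using picard_near_Z[OF assms _ that] by (rule near_Z_imp_gaps[OF that])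
  ultimately show ?thesis
    by (simp add: regular_def)
qed

lemma picard_lipschitz:
  assumes "regular Y" "regular W" "\<And>s. s \<in> {c..c+h} \<Longrightarrow> dist_l1 N (Y s) (W s) \<le> e"
    and "i \<in> {1..N}" "t \<in> {c..c+h}"
  shows "\<bar>picard Y t i - picard W t i\<bar> \<le> L * e * h"
proof -
  have "\<bar>picard Y t i - picard W t i\<bar> = \<bar>(picard Y t i - picard W t i) - (picard Y c i - picard W c i)\<bar>"
    by (simp add: picard_start)
  also have "\<dots> \<le> L * e * (t - c)"
  proof (rule DERIV_bound_imp_abs_diff_le)
    fix s assume "s \<in> {c..t}"
    then have s: "s \<in> {c..c+h}"
      using assms(5) by auto
    show "((\<lambda>t. picard Y t i - picard W t i) has_real_derivative
        velocity N m chi (Y s) i - velocity N m chi (W s) i) (at s within {c..t})"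
      by (rule DERIV_subset[OF DERIV_diff[OF picard_deriv[OF assms(1,4) s] picard_deriv[OF assms(2,4) s]]])
        (use assms(5) in auto)
    have "\<bar>velocity N m chi (Y s) i - velocity N m chi (W s) i\<bar> \<le> L * dist_l1 N (Y s) (W s)"
      using assms(1,2) s by (intro velocity_lipschitz_bound \<delta>_pos m_pos assms(4)) (auto simp: regular_def)
    also have "\<dots> \<le> L * e"
      using assms(3)[OF s] L_pos by simp
    finally show "\<bar>velocity N m chi (Y s) i - velocity N m chi (W s) i\<bar> \<le> L * e" .
  qed (use assms(5) in auto)
  also have "\<dots> \<le> L * e * h"
    using assms(3)[of c] dist_l1_nonneg[of N "Y c" "W c"] L_pos h_pos assms(5) by (intro mult_left_mono) auto
  finally show ?thesis .
qed

primrec iterate :: "nat \<Rightarrow> real \<Rightarrow> nat \<Rightarrow> real" where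
  "iterate 0 = (\<lambda>t. Z)"
| "iterate (Suc k) = picard (iterate k)"

lemma regular_iterate: "regular (iterate k)"
proof (induction k)
  case 0
  have "gaps_ge N \<delta> Z"
    using gaps_ge_mono[OF Z_gaps] \<delta>_pos by simp
  then show ?case
    by (simp add: regular_def)
qed (simp add: regular_picard)

lemma iterate_start: "iterate k c i = Z i"
  by (cases k) (simp_all add: picard_start)

definition B :: "nat \<Rightarrow> real" where
  "B k = real N * M * h * (1 / 2) ^ k"

lemma B_nonneg: "B k \<ge> 0"
  unfolding B_def using M_pos h_pos by simp

lemma iterate_contraction: "t \<in> {c..c+h} \<Longrightarrow> dist_l1 N (iterate (Suc k) t) (iterate k t) \<le> B k"
proof (induction k arbitrary: t)
  case 0
  have "\<bar>picard (\<lambda>t. Z) t i - Z i\<bar> \<le> M * h" if "i \<in> {1..N}" for i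
    using picard_near_Z[OF regular_iterate[of 0] that 0] 0 M_pos
    by (auto intro: order_trans[OF _ mult_left_mono])
  then show ?case
    using dist_l1_le[of N "iterate 1 t" "iterate 0 t" "M * h"] by (simp add: B_def mult.assoc)
next
  case (Suc k)
  have "\<bar>iterate (Suc (Suc k)) t i - iterate (Suc k) t i\<bar> \<le> L * B k * h" if "i \<in> {1..N}" for i
    using picard_lipschitz[OF regular_iterate regular_iterate Suc.IH that Suc.prems] by simp
  then have "dist_l1 N (iterate (Suc (Suc k)) t) (iterate (Suc k) t) \<le> (real N * L * h) * B k"
    using dist_l1_le[of N "iterate (Suc (Suc k)) t" "iterate (Suc k) t" "L * B k * h"] by (simp add: mult_ac)
  also have "\<dots> \<le> B (Suc k)"
    using mult_right_mono[OF N_L_h_le B_nonneg[of k]] by (simp add: B_def)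
  finally show ?case .
qed

definition increment :: "nat \<Rightarrow> real \<Rightarrow> nat \<Rightarrow> real" where
  "increment k t i = iterate (Suc k) t i - iterate k t i"

definition limit :: "real \<Rightarrow> nat \<Rightarrow> real" where
  "limit t i = Z i + (\<Sum>k. increment k t i)"

lemma increment_bound: "t \<in> {c..c+h} \<Longrightarrow> i \<in> {1..N} \<Longrightarrow> \<bar>increment k t i\<bar> \<le> B k"
  unfolding increment_def using abs_le_dist_l1 iterate_contraction order_trans by blast

lemma summable_B: "summable B"
  unfolding B_def by (intro summable_mult) simp

lemma B_tendsto_0: "B \<longlonglongrightarrow> 0"
  unfolding B_def by (intro tendsto_mult_right_zero LIMSEQ_power_zero) simp

lemma iterate_telescope: "iterate n t i = Z i + (\<Sum>k<n. increment k t i)"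
  unfolding increment_def using sum_lessThan_telescope[of "\<lambda>k. iterate k t i" n] by simp

lemma limit_minus_iterate:
  assumes "t \<in> {c..c+h}" "i \<in> {1..N}"
  shows "\<bar>limit t i - iterate n t i\<bar> \<le> 2 * B n"
proof -
  have "summable (\<lambda>k. increment k t i)"
    using increment_bound[OF assms] by (intro summable_comparison_test[OF _ summable_B]) auto
  then have "limit t i - iterate n t i = (\<Sum>k. increment (k + n) t i)"
    unfolding limit_def iterate_telescope by (simp add: suminf_minus_initial_segment[symmetric])
  moreover have "norm (\<Sum>k. increment (k + n) t i) \<le> (\<Sum>k. B (k + n))"
    using increment_bound[OF assms] summable_ignore_initial_segment[OF summable_B]
    by (intro norm_suminf_le) auto
  ultimately have "\<bar>limit t i - iterate n t i\<bar> \<le> (\<Sum>k. B (k + n))"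
    by simp
  also have "(\<Sum>k. B (k + n)) = B n * (\<Sum>k. (1 / 2 :: real) ^ k)"
    unfolding B_def by (subst suminf_mult[symmetric]) (simp_all add: power_add mult_ac)
  also have "\<dots> = 2 * B n"
    using suminf_geometric[of "1 / 2 :: real"] by simp
  finally show ?thesis .
qed

lemma limit_start: "limit c i = Z i"
  unfolding limit_def increment_def iterate_start by simp

lemma regular_limit: "regular limit"
proof -
  have near_Z: "\<bar>limit t i - Z i\<bar> \<le> M * (t - c)" if "t \<in> {c..c+h}" "i \<in> {1..N}" for t i
  proof (rule le_of_le_add_tendsto_0[where E = "\<lambda>n. 2 * B (Suc n)"])
    fix n
    show "\<bar>limit t i - Z i\<bar> \<le> M * (t - c) + 2 * B (Suc n)"
      using limit_minus_iterate[OF that, of "Suc n"] picard_near_Z[OF regular_iterate that(2,1), of n]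
      by simp
  qed (intro tendsto_mult_right_zero LIMSEQ_Suc B_tendsto_0)
  have "uniform_limit {c..c+h} (\<lambda>n t. iterate n t i) (\<lambda>t. limit t i) sequentially" if "i \<in> {1..N}" for i
  proof (rule uniform_limitI)
    fix e :: real assume "e > 0"
    then have "\<forall>\<^sub>F n in sequentially. 2 * B n < e"
      using order_tendstoD(2)[OF tendsto_mult_right_zero[OF B_tendsto_0, of 2]] by simp
    then show "\<forall>\<^sub>F n in sequentially. \<forall>t\<in>{c..c+h}. dist (iterate n t i) (limit t i) < e"
    proof eventually_elim
      case (elim n)
      show ?case
      proof
        fix t assume "t \<in> {c..c+h}"
        with elim show "dist (iterate n t i) (limit t i) < e"
          using limit_minus_iterate[OF _ that, of t n] by (simp add: dist_real_def abs_minus_commute)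
      qed
    qed
  qed
  then have "continuous_on {c..c+h} (\<lambda>t. limit t i)" if "i \<in> {1..N}" for i
    using regular_iterate that by (intro uniform_limit_theorem[OF _ _ trivial_limit_sequentially])
      (auto simp: regular_def)
  then show ?thesis
    unfolding regular_def using near_Z_imp_gaps near_Z by blast
qed

lemma limit_fixed_point:
  assumes "t \<in> {c..c+h}" "i \<in> {1..N}"
  shows "limit t i = picard limit t i"
proof -
  have "\<bar>limit t i - picard limit t i\<bar> \<le> 0"
  proof (rule le_of_le_add_tendsto_0[where E = "\<lambda>n. 2 * B (Suc n) + L * (real N * (2 * B n)) * h"])
    fix n
    have "\<bar>picard (iterate n) t i - picard limit t i\<bar> \<le> L * (real N * (2 * B n)) * h"
      using limit_minus_iterate by (intro picard_lipschitz regular_iterate regular_limit assms dist_l1_le)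
        (simp add: abs_minus_commute)
    then show "\<bar>limit t i - picard limit t i\<bar> \<le> 0 + (2 * B (Suc n) + L * (real N * (2 * B n)) * h)"
      using limit_minus_iterate[OF assms, of "Suc n"] by simp
  qed (intro tendsto_add_zero tendsto_mult_right_zero tendsto_mult_left_zero LIMSEQ_Suc B_tendsto_0)
  then show ?thesis
    by simp
qed

lemma limit_deriv:
  assumes "t \<in> {c..c+h}" "i \<in> {1..N}"
  shows "((\<lambda>s. limit s i) has_real_derivative velocity N m chi (limit t) i) (at t within {c..c+h})"
  using picard_deriv[OF regular_limit assms(2,1)]
  by (rule has_field_derivative_transform_within[where d = 1]) (use assms limit_fixed_point in auto)

end

lemma velocity_flow_local_existence:
  fixes chi c :: real
  assumes "N \<ge> 1" "m > 0" "\<delta> > 0" "gaps_ge N (2 * \<delta>) Z"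
  defines "h \<equiv> picard_step N m chi \<delta>"
  obtains y where
    "\<And>t i. t \<in> {c..c+h} \<Longrightarrow> i \<in> {1..N} \<Longrightarrow>
       ((\<lambda>s. y s i) has_real_derivative velocity N m chi (y t) i) (at t within {c..c+h})"
    "\<And>t. t \<in> {c..c+h} \<Longrightarrow> gaps_ge N \<delta> (y t)" "\<And>i. y c i = Z i"
proof -
  interpret picard_iteration N m chi \<delta> Z c
    using assms by unfold_locales
  show ?thesis
    using that limit_deriv limit_start regular_limit unfolding h_def regular_def by blast
qed

section \<open>Continuation and blow-up\<close>

lemma solution_eq_velocity_flow:
  fixes y :: "real \<Rightarrow> nat \<Rightarrow> real"
  assumes sol: "is_solution N m chi X0 (ereal Tr) X" and "m > 0" "\<delta> > 0" "0 \<le> c" "c \<le> t" "t < Tr"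
    and gaps: "\<And>s. s \<in> {c..t} \<Longrightarrow> gaps_ge N \<delta> (X s)" "\<And>s. s \<in> {c..t} \<Longrightarrow> gaps_ge N \<delta> (y s)"
    and y: "\<And>s i. s \<in> {c..t} \<Longrightarrow> i \<in> {1..N} \<Longrightarrow>
              ((\<lambda>s. y s i) has_real_derivative velocity N m chi (y s) i) (at s within {c..t})"
    and start: "\<And>i. i \<in> {1..N} \<Longrightarrow> X c i = y c i" and "i \<in> {1..N}"
  shows "X t i = y t i"
proof (rule velocity_flow_unique[where Y = X and W = y, OF assms(5,3,2) gaps _ y start assms(11)])
  fix s j assume "s \<in> {c..t}" "j \<in> {1..N}"
  moreover have "ereal t < ereal Tr"
    using assms(6) by simp
  ultimately show "((\<lambda>s. X s j) has_real_derivative velocity N m chi (X s) j) (at s within {c..t})"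
    using assms(4) by (intro DERIV_subset[OF is_solution_on_Icc(2)[OF sol]]) auto
qed

lemma solution_glue:
  assumes sol: "is_solution N m chi X0 (ereal Tr) X" and "0 \<le> c" "c < Tr" "Tr < c'"
    and y: "\<And>t i. t \<in> {c..c'} \<Longrightarrow> i \<in> {1..N} \<Longrightarrow>
              ((\<lambda>s. y s i) has_real_derivative velocity N m chi (y t) i) (at t within {c..c'})"
    and y_in_R: "\<And>t. t \<in> {c..c'} \<Longrightarrow> in_R N (y t)"
    and agree: "\<And>t i. c \<le> t \<Longrightarrow> t < Tr \<Longrightarrow> i \<in> {1..N} \<Longrightarrow> X t i = y t i"
  shows "is_solution N m chi X0 (ereal c') (\<lambda>t. if t < Tr then X t else y t)"
    (is "is_solution _ _ _ _ _ ?Y")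
  unfolding is_solution_def
proof (intro conjI allI impI ballI)
  show "0 < ereal c'" "?Y 0 = X0"
    using sol assms(2-4) unfolding is_solution_def by auto
  have X: "\<And>t. 0 \<le> t \<Longrightarrow> t < Tr \<Longrightarrow> in_R N (X t) \<and> (\<forall>i\<in>{1..N}.
      ((\<lambda>s. X s i) has_real_derivative velocity N m chi (X t) i) (at t within {s. 0 \<le> s \<and> s < Tr}))"
    using sol unfolding is_solution_def by auto
  fix t assume t: "0 \<le> t \<and> ereal t < ereal c'"
  show "in_R N (?Y t)"
    using X[of t] y_in_R[of t] t assms(2-4) by auto
  fix i assume i: "i \<in> {1..N}"
  show "((\<lambda>s. ?Y s i) has_real_derivative velocity N m chi (?Y t) i) (at t within {s. 0 \<le> s \<and> ereal s < ereal c'})"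
  proof (cases "t < Tr")
    case True
    have "((\<lambda>s. X s i) has_real_derivative velocity N m chi (X t) i) (at t within {s. 0 \<le> s \<and> s < Tr})"
      using X[of t] t True i by blast
    then have "((\<lambda>s. ?Y s i) has_real_derivative velocity N m chi (X t) i) (at t within {s. 0 \<le> s \<and> s < Tr})"
      by (rule has_field_derivative_transform_within[where d = 1]) (use t True in auto)
    moreover have "at t within {s. 0 \<le> s \<and> ereal s < ereal c'} = at t within {s. 0 \<le> s \<and> s < Tr}"
      using True assms(4) by (intro at_within_nhd[where S = "{..<Tr}"]) force+
    ultimately show ?thesis
      using True by simp
  next
    case False
    then have t': "t \<in> {c<..<c'}"
      using t assms(3) by auto
    have "((\<lambda>s. y s i) has_real_derivative velocity N m chi (y t) i) (at t within {c<..<c'})"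
      by (rule DERIV_subset[OF y[OF _ i]]) (use t' in auto)
    then have "((\<lambda>s. ?Y s i) has_real_derivative velocity N m chi (y t) i) (at t within {c<..<c'})"
      by (rule has_field_derivative_transform_within[where d = 1]) (use t' agree[OF _ _ i] in auto)
    moreover have "at t within {s. 0 \<le> s \<and> ereal s < ereal c'} = at t within {c<..<c'}"
      using t' assms(2) by (intro at_within_nhd[where S = "{c<..}"]) force+
    ultimately show ?thesis
      using False by simp
  qed
qed

text \<open>Restart the flow at a time \<open>c\<close> shortly before \<open>Tr\<close>: the local existence time only depends
  on the lower bound for the gaps, so it reaches past \<open>Tr\<close>; by uniqueness it agrees with \<open>X\<close>.\<close>

lemma solution_extends:
  assumes sol: "is_solution N m chi X0 (ereal Tr) X" and "N \<ge> 1" "m > 0" "\<delta> > 0" "b < Tr"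
    and gaps: "\<And>t. b < t \<Longrightarrow> t < Tr \<Longrightarrow> gaps_ge N \<delta> (X t)"
  obtains c' Y where "Tr < c'" "is_solution N m chi X0 (ereal c') Y" "\<And>t. t < Tr \<Longrightarrow> Y t = X t"
proof -
  define h where "h = picard_step N m chi (\<delta> / 2)"
  have "h > 0"
    unfolding h_def using assms(2-4) by (intro picard_step_pos) auto
  have "0 < Tr"
    using sol unfolding is_solution_def by simp
  define c where "c = Tr - min (h / 2) ((Tr - max b 0) / 2)"
  have c: "b < c" "0 < c" "c < Tr" "Tr < c + h"
    unfolding c_def using \<open>h > 0\<close> \<open>0 < Tr\<close> assms(5) by (auto simp: min_def max_def field_simps)
  have "gaps_ge N (2 * (\<delta> / 2)) (X c)"
    using gaps c by simp
  then obtain y where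
    y: "\<And>t i. t \<in> {c..c+h} \<Longrightarrow> i \<in> {1..N} \<Longrightarrow>
          ((\<lambda>s. y s i) has_real_derivative velocity N m chi (y t) i) (at t within {c..c+h})"
    and y_gaps: "\<And>t. t \<in> {c..c+h} \<Longrightarrow> gaps_ge N (\<delta> / 2) (y t)" and y_start: "\<And>i. y c i = X c i"
    using velocity_flow_local_existence[where chi = chi and c = c and Z = "X c" and \<delta> = "\<delta> / 2"] assms(2-4)
    unfolding h_def by auto
  have agree: "X t i = y t i" if "c \<le> t" "t < Tr" "i \<in> {1..N}" for t i
  proof (rule solution_eq_velocity_flow[OF sol assms(3), where \<delta> = "\<delta> / 2" and y = y])
    fix s assume "s \<in> {c..t}"
    then show "gaps_ge N (\<delta> / 2) (X s)" "gaps_ge N (\<delta> / 2) (y s)"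
      using gaps[of s] y_gaps[of s] c that gaps_ge_mono[of N \<delta> "X s" "\<delta> / 2"] assms(4) by auto
    fix j assume "j \<in> {1..N}"
    show "((\<lambda>s. y s j) has_real_derivative velocity N m chi (y s) j) (at s within {c..t})"
      by (rule DERIV_subset[OF y]) (use \<open>s \<in> {c..t}\<close> \<open>j \<in> {1..N}\<close> c that in auto)
  qed (use y_start c that assms(4) in auto)
  have y_in_R: "in_R N (y t)" if "t \<in> {c..c+h}" for t
    using is_solution_on_Icc(1)[OF sol, of c c] c assms(4)
    by (intro velocity_flow_in_R[OF y that y_gaps[OF that]]) (auto simp: y_start in_R_def)
  show ?thesis
  proof (rule that)
    show "is_solution N m chi X0 (ereal (c + h)) (\<lambda>t. if t < Tr then X t else y t)"
      by (rule solution_glue[OF sol _ _ _ y y_in_R agree]) (use c in auto)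
  qed (use c in auto)
qed

lemma solution_gaps_eventually_ge:
  assumes sol: "is_solution N m chi X0 (ereal Tr) X" and "N \<ge> 2"
    and no_collapse: "\<not> (\<exists>i0\<in>{1..<N}. \<exists>tn. (\<forall>n. 0 \<le> tn n \<and> tn n < Tr) \<and> tn \<longlonglongrightarrow> Tr \<and>
                         (\<lambda>n. X (tn n) (i0+1) - X (tn n) i0) \<longlonglongrightarrow> 0)"
  shows "\<exists>\<delta>>0. eventually (\<lambda>t. gaps_ge N \<delta> (X t)) (at_left Tr)"
proof -
  have "\<forall>i\<in>{1..<N}. \<exists>d>0. eventually (\<lambda>t. d \<le> X t (i+1) - X t i) (at_left Tr)"
  proof
    fix i assume "i \<in> {1..<N}"
    then show "\<exists>d>0. eventually (\<lambda>t. d \<le> X t (i+1) - X t i) (at_left Tr)"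
      using sol no_collapse
      by (intro vanishing_sequence_or_eventually_ge) (auto simp: is_solution_def in_R_def)
  qed
  then obtain d where d: "\<And>i. i \<in> {1..<N} \<Longrightarrow> d i > 0 \<and> eventually (\<lambda>t. d i \<le> X t (i+1) - X t i) (at_left Tr)"
    by metis
  define \<delta> where "\<delta> = Min (d ` {1..<N})"
  have "\<delta> > 0"
    unfolding \<delta>_def using d assms(2) by (subst Min_gr_iff) auto
  have "eventually (\<lambda>t. \<forall>i\<in>{1..<N}. d i \<le> X t (i+1) - X t i) (at_left Tr)"
    using d by (intro eventually_ball_finite) auto
  then have "eventually (\<lambda>t. gaps_ge N \<delta> (X t)) (at_left Tr)"
    by eventually_elim (auto simp: gaps_ge_def \<delta>_def intro: order_trans[OF Min_le])
  with \<open>\<delta> > 0\<close> show ?thesis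
    by blast
qed

lemma maximal_solution_gap_collapse:
  assumes max: "is_maximal_solution N m chi X0 (ereal Tr) X" and "N \<ge> 2" "m > 0"
  shows "\<exists>i0\<in>{1..<N}. \<exists>tn. (\<forall>n. 0 \<le> tn n \<and> tn n < Tr) \<and> tn \<longlonglongrightarrow> Tr \<and>
           (\<lambda>n. X (tn n) (i0+1) - X (tn n) i0) \<longlonglongrightarrow> 0"
proof (rule ccontr)
  have sol: "is_solution N m chi X0 (ereal Tr) X"
    using max unfolding is_maximal_solution_def by simp
  assume "\<not> ?thesis"
  then obtain \<delta> where "\<delta> > 0" "eventually (\<lambda>t. gaps_ge N \<delta> (X t)) (at_left Tr)"
    using solution_gaps_eventually_ge[OF sol assms(2)] by blast
  then obtain b where "b < Tr" and gaps: "\<And>t. b < t \<Longrightarrow> t < Tr \<Longrightarrow> gaps_ge N \<delta> (X t)"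
    using eventually_at_left[of "Tr - 1" Tr] by auto
  obtain c' Y where ext: "Tr < c'" "is_solution N m chi X0 (ereal c') Y" "\<And>t. t < Tr \<Longrightarrow> Y t = X t"
    by (rule solution_extends[OF sol _ _ \<open>\<delta> > 0\<close> \<open>b < Tr\<close> gaps]) (use assms(2,3) in auto)
  have "ereal Tr < ereal c'" "\<forall>t. 0 \<le> t \<and> ereal t < ereal Tr \<longrightarrow> (\<forall>i\<in>{1..N}. Y t i = X t i)"
    using ext(1,3) by simp_all
  with ext(2) show False
    using max unfolding is_maximal_solution_def by blast
qed

theorem proposition4p4:
  fixes N :: nat and m chi :: real and X0 :: "nat \<Rightarrow> real"
    and T :: ereal and X :: "real \<Rightarrow> nat \<Rightarrow> real"
  assumes "m > 1" and "N \<ge> 2" and "chi > C_const N m"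
    and "in_R N X0" and "F_energy N m chi X0 < 0"
    and "is_maximal_solution N m chi X0 T X"
  shows "T < \<infinity> \<and>
    (\<exists>i0\<in>{1..<N}. \<exists>tn :: nat \<Rightarrow> real.
       (\<forall>n. 0 \<le> tn n \<and> ereal (tn n) < T) \<and>
       tn \<longlonglongrightarrow> real_of_ereal T \<and>
       (\<lambda>n. X (tn n) (i0+1) - X (tn n) i0) \<longlonglongrightarrow> 0)"
proof -
  have sol: "is_solution N m chi X0 T X"
    using assms(6) unfolding is_maximal_solution_def by simp
  have "T < \<infinity>"
    using solution_time_finite[OF sol assms(1,5)] .
  moreover have "0 < T"
    using sol unfolding is_solution_def by simp
  ultimately obtain Tr where T: "T = ereal Tr"
    by (cases T) auto
  with assms(1,2,6) maximal_solution_gap_collapse[of N m chi X0 Tr X] \<open>T < \<infinity>\<close> show ?thesis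
    by auto
qed

end
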